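(* Let $G$ be a finite group, $X\subseteq G$ a conjugacy class, and $V=\Bbbk X$ a Yetter–Drinfeld module over $\Bbbk G$ with basis $\{v_x\}_{x\in X}$, $v_x$ homogeneous of $G$-degree $x$, and $g\cdot v_y\in\Bbbk^\times v_{gyg^{-1}}$; let $q\colon X\times X\to\Bbbk^\times$ be the corresponding cocycle, defined by $x\cdot v_y=q(x,y)v_{x\triangleright y}$, so that the braiding is $c_q(v_x\otimes v_y)=q(x,y)\,v_{x\triangleright y}\otimes v_x$. Let $q'$ be a cocycle on $X$ twist-equivalent to $q$, and let $\mathcal B(X,q)$, $\mathcal B(X,q')$ be the Nichols algebras of $(\Bbbk X,c_q)$ and $(\Bbbk X,c_{q'})$. Then for every $d\in\mathbb N$ (with $d\ge2$), $\mathcal B(X,q)\cong\widehat{\mathcal B(X,q)}_d$ if and only if $\mathcal B(X,q')\cong\widehat{\mathcal B(X,q')}_d$, where the isomorphisms are the natural projections.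
   Context: A rack $(X,\triangleright)$ is a nonempty set with a binary operation such that each $x\triangleright-$ is bijective and $x\triangleright(y\triangleright z)=(x\triangleright y)\triangleright(x\triangleright z)$; here $x\triangleright y=xyx^{-1}$ in $G$. A $2$-cocycle of degree $1$ on $X$ is $q\colon X\times X\to\Bbbk^\times$ with $q(x,y\triangleright z)q(y,z)=q(x\triangleright y,x\triangleright z)q(x,z)$. Two such cocycles $q,q'$ on $X\subseteq G$ are twist-equivalent if there is a group $2$-cocycle $\sigma\colon G\times G\to\Bbbk^\times$ (i.e. $\sigma(x,y)\sigma(xy,z)=\sigma(y,z)\sigma(x,yz)$, $\sigma(x,1)=\sigma(1,x)=1$) with $q'(x,y)=\sigma(x,y)q(x,y)\sigma(x\triangleright y,x)^{-1}$ for all $x,y\in X$. For a vector space $V$ with a solution $c$ of the braid equation, $B_n$ (braid group with generators $\sigma_1,\dots,\sigma_{n-1}$) acts on $V^{\otimes n}$ by $\rho_n(\sigma_i)=\mathrm{id}^{\otimes(i-1)}\otimes c\otimes\mathrm{id}^{\otimes(n-i-1)}$; the Matsumoto section $M_n\colon\mathbb S_n\to B_n$ sends a reduced expression $s_{i_1}\cdots s_{i_l}$ to $\sigma_{i_1}\cdots\sigma_{i_l}$; the quantum symmetrizer is $Q_n=\sum_{w\in\mathbb S_n}\rho_n(M_n(w))$. The Nichols algebra is $\mathcal B(V,c)=T(V)/\bigoplus_{n\ge2}\ker Q_n$ (a connected bialgebra with $V$ primitive). For a connected bialgebra $B=T(B_1)/J$ generated in degree $1$ ($J$ a graded ideal and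 coideal in degrees $\ge2$), the $d$-atic cover is $\widehat B_d=T(B_1)/\big(\bigoplus_{m=2}^d(J\cap B_1^{\otimes m})\big)$ (quotient by the generated ideal); for $B=\mathcal B(V,c)$, $J\cap V^{\otimes m}=\ker Q_m$. *)

theory Defs
  imports "HOL.Modules" "HOL-Library.Function_Algebras" "HOL-Algebra.Group" "HOL-Combinatorics.Transposition" "HOL-Combinatorics.Permutations"
begin

definition rtri :: "('g, 'b) monoid_scheme \<Rightarrow> 'g \<Rightarrow> 'g \<Rightarrow> 'g" where
  "rtri G x y = x \<otimes>\<^bsub>G\<^esub> y \<otimes>\<^bsub>G\<^esub> inv\<^bsub>G\<^esub> x"

definition conj_class :: "('g, 'b) monoid_scheme \<Rightarrow> 'g set \<Rightarrow> bool" where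
  "conj_class G X = (\<exists>a \<in> carrier G. X = {g \<otimes>\<^bsub>G\<^esub> a \<otimes>\<^bsub>G\<^esub> inv\<^bsub>G\<^esub> g | g. g \<in> carrier G})"

definition rack_cocycle :: "('g \<Rightarrow> 'g \<Rightarrow> 'g) \<Rightarrow> 'g set \<Rightarrow> ('g \<Rightarrow> 'g \<Rightarrow> 'k::field) \<Rightarrow> bool" where
  "rack_cocycle tri X q =
     ((\<forall>x\<in>X. \<forall>y\<in>X. q x y \<noteq> 0) \<and>
      (\<forall>x\<in>X. \<forall>y\<in>X. \<forall>z\<in>X. q x (tri y z) * q y z = q (tri x y) (tri x z) * q x z))"

text \<open>The cocycle q comes from a Yetter-Drinfeld module structure on kX over kG:
  g . v_y = chi g y v_(g y g^-1), with chi g y nonzero, and q x y = chi x y.\<close>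
definition yd_cocycle :: "('g, 'b) monoid_scheme \<Rightarrow> 'g set \<Rightarrow> ('g \<Rightarrow> 'g \<Rightarrow> 'k::field) \<Rightarrow> bool" where
  "yd_cocycle G X q =
     (\<exists>chi :: 'g \<Rightarrow> 'g \<Rightarrow> 'k.
        (\<forall>g\<in>carrier G. \<forall>y\<in>X. chi g y \<noteq> 0) \<and>
        (\<forall>y\<in>X. chi \<one>\<^bsub>G\<^esub> y = 1) \<and>
        (\<forall>g\<in>carrier G. \<forall>h\<in>carrier G. \<forall>y\<in>X.
            chi (g \<otimes>\<^bsub>G\<^esub> h) y = chi g (rtri G h y) * chi h y) \<and>
        (\<forall>x\<in>X. \<forall>y\<in>X. q x y = chi x y))"

definition group_2cocycle :: "('g, 'b) monoid_scheme \<Rightarrow> ('g \<Rightarrow> 'g \<Rightarrow> 'k::field) \<Rightarrow> bool" where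
  "group_2cocycle G \<sigma> =
     ((\<forall>x\<in>carrier G. \<forall>y\<in>carrier G. \<sigma> x y \<noteq> 0) \<and>
      (\<forall>x\<in>carrier G. \<forall>y\<in>carrier G. \<forall>z\<in>carrier G.
          \<sigma> x y * \<sigma> (x \<otimes>\<^bsub>G\<^esub> y) z = \<sigma> y z * \<sigma> x (y \<otimes>\<^bsub>G\<^esub> z)) \<and>
      (\<forall>x\<in>carrier G. \<sigma> x \<one>\<^bsub>G\<^esub> = 1 \<and> \<sigma> \<one>\<^bsub>G\<^esub> x = 1))"

definition twist_equivalent :: "('g, 'b) monoid_scheme \<Rightarrow> 'g set \<Rightarrow> ('g \<Rightarrow> 'g \<Rightarrow> 'k::field) \<Rightarrow> ('g \<Rightarrow> 'g \<Rightarrow> 'k) \<Rightarrow> bool" where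
  "twist_equivalent G X q q' =
     (\<exists>\<sigma>. group_2cocycle G \<sigma> \<and>
        (\<forall>x\<in>X. \<forall>y\<in>X. q' x y = \<sigma> x y * q x y * inverse (\<sigma> (rtri G x y) x)))"

text \<open>Tensors of degree n in (kX)^{\<otimes> n} are represented as functions on words (lists) over X,
  supported on words of length n; the basis vector v_{x_1} \<otimes> ... \<otimes> v_{x_n} is the indicator of
  the word [x_1,...,x_n].\<close>
definition words :: "'g set \<Rightarrow> nat \<Rightarrow> 'g list set" where
  "words X n = {w. length w = n \<and> set w \<subseteq> X}"

definition tensor_space :: "'g set \<Rightarrow> nat \<Rightarrow> ('g list \<Rightarrow> 'k::field) set" where
  "tensor_space X n = {f. \<forall>w. f w \<noteq> 0 \<longrightarrow> w \<in> words X n}"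

definition basis_vec :: "'g list \<Rightarrow> 'g list \<Rightarrow> 'k::field" where
  "basis_vec u = (\<lambda>w. if w = u then 1 else 0)"

definition tens :: "nat \<Rightarrow> ('g list \<Rightarrow> 'k::field) \<Rightarrow> ('g list \<Rightarrow> 'k) \<Rightarrow> 'g list \<Rightarrow> 'k" where
  "tens a f g = (\<lambda>w. f (take a w) * g (drop a w))"

text \<open>c_q(v_x \<otimes> v_y) = q(x,y) v_{x\<triangleright>y} \<otimes> v_x, acting at (0-based) positions i, i+1.\<close>
definition bstep :: "('g \<Rightarrow> 'g \<Rightarrow> 'g) \<Rightarrow> nat \<Rightarrow> 'g list \<Rightarrow> 'g list" where
  "bstep tri i w = w[i := tri (w ! i) (w ! Suc i), Suc i := w ! i]"

definition braid_gen_op ::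
  "('g \<Rightarrow> 'g \<Rightarrow> 'g) \<Rightarrow> 'g set \<Rightarrow> ('g \<Rightarrow> 'g \<Rightarrow> 'k::field) \<Rightarrow> nat \<Rightarrow> nat
     \<Rightarrow> ('g list \<Rightarrow> 'k) \<Rightarrow> ('g list \<Rightarrow> 'k)" where
  "braid_gen_op tri X q n i f =
     (\<lambda>u. \<Sum>w\<in>{w \<in> words X n. bstep tri i w = u}. q (w ! i) (w ! Suc i) * f w)"

text \<open>Symmetric group S_n as permutations of {0..<n}; simple transposition s_i swaps i and i+1
  (0-based, i+1 < n).\<close>
definition sn_word_prod :: "nat list \<Rightarrow> nat \<Rightarrow> nat" where
  "sn_word_prod is = foldr (\<lambda>i p. transpose i (Suc i) \<circ> p) is id"

definition reduced_word :: "nat \<Rightarrow> (nat \<Rightarrow> nat) \<Rightarrow> nat list \<Rightarrow> bool" where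
  "reduced_word n p is =
     (set is \<subseteq> {i. Suc i < n} \<and> sn_word_prod is = p \<and>
      (\<forall>js. set js \<subseteq> {i. Suc i < n} \<and> sn_word_prod js = p \<longrightarrow> length is \<le> length js))"

text \<open>rho_n(M_n(w)) for the Matsumoto section, using a (chosen) reduced expression.\<close>
definition matsumoto_op ::
  "('g \<Rightarrow> 'g \<Rightarrow> 'g) \<Rightarrow> 'g set \<Rightarrow> ('g \<Rightarrow> 'g \<Rightarrow> 'k::field) \<Rightarrow> nat \<Rightarrow> (nat \<Rightarrow> nat)
     \<Rightarrow> ('g list \<Rightarrow> 'k) \<Rightarrow> ('g list \<Rightarrow> 'k)" where
  "matsumoto_op tri X q n p = foldr (braid_gen_op tri X q n) (SOME is. reduced_word n p is)"

definition quantum_symmetrizer ::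
  "('g \<Rightarrow> 'g \<Rightarrow> 'g) \<Rightarrow> 'g set \<Rightarrow> ('g \<Rightarrow> 'g \<Rightarrow> 'k::field) \<Rightarrow> nat
     \<Rightarrow> ('g list \<Rightarrow> 'k) \<Rightarrow> ('g list \<Rightarrow> 'k)" where
  "quantum_symmetrizer tri X q n f =
     (\<lambda>u. \<Sum>p\<in>{p. p permutes {..<n}}. matsumoto_op tri X q n p f u)"

definition ker_Q :: "('g \<Rightarrow> 'g \<Rightarrow> 'g) \<Rightarrow> 'g set \<Rightarrow> ('g \<Rightarrow> 'g \<Rightarrow> 'k::field) \<Rightarrow> nat \<Rightarrow> ('g list \<Rightarrow> 'k) set" where
  "ker_Q tri X q n = {f \<in> tensor_space X n. quantum_symmetrizer tri X q n f = (\<lambda>_. 0)}"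

text \<open>Degree n component of the defining ideal J of the Nichols algebra: ker Q_n for n \<ge> 2.\<close>
definition nichols_ideal_deg :: "('g \<Rightarrow> 'g \<Rightarrow> 'g) \<Rightarrow> 'g set \<Rightarrow> ('g \<Rightarrow> 'g \<Rightarrow> 'k::field) \<Rightarrow> nat \<Rightarrow> ('g list \<Rightarrow> 'k) set" where
  "nichols_ideal_deg tri X q n = (if 2 \<le> n then ker_Q tri X q n else {\<lambda>_. 0})"

text \<open>Degree n component of the two-sided ideal of T(V) generated by the ker Q_m, 2 \<le> m \<le> d.\<close>
definition dcover_ideal_deg ::
  "('g \<Rightarrow> 'g \<Rightarrow> 'g) \<Rightarrow> 'g set \<Rightarrow> ('g \<Rightarrow> 'g \<Rightarrow> 'k::field) \<Rightarrow> nat \<Rightarrow> nat \<Rightarrow> ('g list \<Rightarrow> 'k) set" where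
  "dcover_ideal_deg tri X q d n =
     Modules.module.span (\<lambda>(c::'k) f w. c * f w)
       {tens (length u) (basis_vec u) (tens m k (basis_vec v)) | u v m k.
          set u \<subseteq> X \<and> set v \<subseteq> X \<and> 2 \<le> m \<and> m \<le> d \<and> k \<in> ker_Q tri X q m \<and>
          length u + m + length v = n}"

text \<open>The natural projection from the d-atic cover onto the Nichols algebra is an isomorphism
  iff the two graded ideals coincide.\<close>
definition nichols_eq_dcover :: "('g \<Rightarrow> 'g \<Rightarrow> 'g) \<Rightarrow> 'g set \<Rightarrow> ('g \<Rightarrow> 'g \<Rightarrow> 'k::field) \<Rightarrow> nat \<Rightarrow> bool" where
  "nichols_eq_dcover tri X q d = (\<forall>n. dcover_ideal_deg tri X q d n = nichols_ideal_deg tri X q n)"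

end

theory Submission imports Defs begin

text \<open>Twisting by a group 2-cocycle \<sigma> is realised on tensors by a diagonal rescaling: the word
  v(x_1) \<otimes> \<dots> \<otimes> v(x_n) is multiplied by the product over i of \<sigma>(x_1 \<cdots> x_(i-1), x_i)^-1.
  The cocycle identity makes this rescaling intertwine c_q and c_q' at every pair of adjacent
  positions, so it commutes with the quantum symmetrizers and carries ker Q_n(q) onto
  ker Q_n(q'). It is not multiplicative, but on u \<otimes> k \<otimes> v with k homogeneous of G-degree h it
  agrees with the rescaling of k up to a scalar depending only on u, v and h. Since each ker Q_m
  is stable under taking homogeneous components, the ideal generated by the ker Q_m, m \<le> d, is
  carried into the corresponding ideal for q'; the inverse twist gives the reverse inclusions.\<close>

lemma sum_apply: "(sum f A) w = (\<Sum>a\<in>A. f a w)"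
  by (induction A rule: infinite_finite_induct) auto

lemma module_pointwise_scale: "module (\<lambda>(c::'k::field) (f::'a \<Rightarrow> 'k) w. c * f w)"
  by unfold_locales (auto simp: fun_eq_iff algebra_simps)

lemma list_split_at_pair:
  assumes "Suc i < length w"
  obtains u a b v where "w = u @ a # b # v" and "length u = i"
  using assms id_take_nth_drop[of i w] Cons_nth_drop_Suc[of "Suc i" w]
  by (metis Suc_lessD length_take min.absorb4)

lemma bstep_append: "length u = i \<Longrightarrow> bstep tri i (u @ a # b # v) = u @ tri a b # a # v"
  by (simp add: bstep_def list_update_append nth_append)


section \<open>Reduced words\<close>

lemma sn_word_prod_append: "sn_word_prod (xs @ ys) = sn_word_prod xs \<circ> sn_word_prod ys"
  unfolding sn_word_prod_def by (induction xs) auto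

lemma transpose_adjacent_word:
  assumes "a < b" "b < n"
  shows "\<exists>is. set is \<subseteq> {i. Suc i < n} \<and> sn_word_prod is = transpose a b"
  using assms
proof (induction b)
  case 0 then show ?case by simp
next
  case (Suc b)
  show ?case
  proof (cases "a = b")
    case True
    then show ?thesis using Suc by (intro exI[of _ "[b]"]) (simp add: sn_word_prod_def)
  next
    case False
    then obtain js where js: "set js \<subseteq> {i. Suc i < n}" "sn_word_prod js = transpose a b"
      using Suc by auto
    have "transpose a (Suc b) = transpose b (Suc b) \<circ> transpose a b \<circ> transpose b (Suc b)"
      using False Suc by (auto simp: fun_eq_iff transpose_def)
    moreover have "sn_word_prod [b] = transpose b (Suc b)" by (simp add: sn_word_prod_def)
    ultimately have "sn_word_prod ([b] @ js @ [b]) = transpose a (Suc b)"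
      by (simp only: sn_word_prod_append js(2) o_assoc)
    then show ?thesis using js Suc by (intro exI[of _ "[b] @ js @ [b]"]) auto
  qed
qed

lemma permutes_adjacent_word:
  assumes "p permutes {..<n}"
  shows "\<exists>is. set is \<subseteq> {i. Suc i < n} \<and> sn_word_prod is = p"
  using assms finite_lessThan
proof (induction rule: permutes_induct)
  case id then show ?case by (intro exI[of _ "[]"]) (simp add: sn_word_prod_def)
next
  case (swap a b p)
  then obtain js where js: "set js \<subseteq> {i. Suc i < n}" "sn_word_prod js = p" by auto
  obtain ks where ks: "set ks \<subseteq> {i. Suc i < n}" "sn_word_prod ks = transpose a b"
  proof (cases "a < b")
    case True then show ?thesis using that transpose_adjacent_word[of a b n] swap by auto
  next
    case False then have "b < a" using swap by auto
    then show ?thesis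
      using that transpose_adjacent_word[of b a n] swap by (auto simp: transpose_commute)
  qed
  show ?case using js ks by (intro exI[of _ "ks @ js"]) (simp add: sn_word_prod_append)
qed

lemma reduced_word_some:
  assumes "p permutes {..<n}"
  shows "set (SOME is. reduced_word n p is) \<subseteq> {i. Suc i < n}"
proof -
  obtain js where "set js \<subseteq> {i. Suc i < n} \<and> sn_word_prod js = p"
    using permutes_adjacent_word[OF assms] by auto
  from ex_has_least_nat[of "\<lambda>is. set is \<subseteq> {i. Suc i < n} \<and> sn_word_prod is = p" js length, OF this]
  have "\<exists>is. reduced_word n p is" unfolding reduced_word_def by blast
  then have "reduced_word n p (SOME is. reduced_word n p is)" by (rule someI_ex)
  then show ?thesis unfolding reduced_word_def by blast
qed


section \<open>Diagonal operators on tensors\<close>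

definition diagonal_op :: "('a list \<Rightarrow> 'k::field) \<Rightarrow> ('a list \<Rightarrow> 'k) \<Rightarrow> 'a list \<Rightarrow> 'k" where
  "diagonal_op \<delta> f = (\<lambda>w. \<delta> w * f w)"

lemma module_hom_diagonal_op:
  "module_hom (\<lambda>(c::'k::field) f w. c * f w) (\<lambda>c f w. c * f w) (diagonal_op \<delta>)"
  unfolding module_hom_iff diagonal_op_def
  by (simp add: module_pointwise_scale fun_eq_iff algebra_simps)

lemma diagonal_op_tensor_space: "f \<in> tensor_space X n \<Longrightarrow> diagonal_op \<delta> f \<in> tensor_space X n"
  unfolding tensor_space_def diagonal_op_def by auto

lemma braid_gen_op_diagonal_op:
  assumes "\<And>w. w \<in> words X n \<Longrightarrow>
    \<delta> (bstep tri i w) * q (w ! i) (w ! Suc i) = q' (w ! i) (w ! Suc i) * \<delta> w"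
  shows "braid_gen_op tri X q' n i (diagonal_op \<delta> f) = diagonal_op \<delta> (braid_gen_op tri X q n i f)"
proof
  fix u
  have "q' (w ! i) (w ! Suc i) * (\<delta> w * f w) = \<delta> u * (q (w ! i) (w ! Suc i) * f w)"
    if "w \<in> words X n" "bstep tri i w = u" for w
    using assms[OF that(1)] that(2) by (metis mult.assoc)
  then show "braid_gen_op tri X q' n i (diagonal_op \<delta> f) u = diagonal_op \<delta> (braid_gen_op tri X q n i f) u"
    unfolding braid_gen_op_def diagonal_op_def sum_distrib_left by (auto intro: sum.cong)
qed

lemma quantum_symmetrizer_diagonal_op:
  assumes "\<And>i w. Suc i < n \<Longrightarrow> w \<in> words X n \<Longrightarrow>
    \<delta> (bstep tri i w) * q (w ! i) (w ! Suc i) = q' (w ! i) (w ! Suc i) * \<delta> w"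
  shows "quantum_symmetrizer tri X q' n (diagonal_op \<delta> f) =
    diagonal_op \<delta> (quantum_symmetrizer tri X q n f)"
proof -
  have braids: "foldr (braid_gen_op tri X q' n) is (diagonal_op \<delta> f) =
      diagonal_op \<delta> (foldr (braid_gen_op tri X q n) is f)"
    if "set is \<subseteq> {i. Suc i < n}" for "is"
    using that by (induction "is") (auto simp: braid_gen_op_diagonal_op assms)
  have "matsumoto_op tri X q' n p (diagonal_op \<delta> f) = diagonal_op \<delta> (matsumoto_op tri X q n p f)"
    if "p permutes {..<n}" for p
    unfolding matsumoto_op_def using braids reduced_word_some[OF that] by blast
  then show ?thesis
    unfolding quantum_symmetrizer_def by (simp add: diagonal_op_def sum_distrib_left fun_eq_iff)
qed

lemma ker_Q_diagonal_op:
  assumes "\<And>i w. Suc i < n \<Longrightarrow> w \<in> words X n \<Longrightarrow>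
    \<delta> (bstep tri i w) * q (w ! i) (w ! Suc i) = q' (w ! i) (w ! Suc i) * \<delta> w"
    and "f \<in> ker_Q tri X q n"
  shows "diagonal_op \<delta> f \<in> ker_Q tri X q' n"
proof -
  have "quantum_symmetrizer tri X q' n (diagonal_op \<delta> f) = diagonal_op \<delta> (quantum_symmetrizer tri X q n f)"
    by (rule quantum_symmetrizer_diagonal_op) (rule assms(1))
  moreover have "f \<in> tensor_space X n" "quantum_symmetrizer tri X q n f = (\<lambda>_. 0)"
    using assms(2) unfolding ker_Q_def by auto
  ultimately show ?thesis
    using diagonal_op_tensor_space unfolding ker_Q_def by (simp add: diagonal_op_def)
qed

abbreviation ideal_gen :: "'g list \<Rightarrow> nat \<Rightarrow> ('g list \<Rightarrow> 'k::field) \<Rightarrow> 'g list \<Rightarrow> 'g list \<Rightarrow> 'k" where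
  "ideal_gen u m k v \<equiv> tens (length u) (basis_vec u) (tens m k (basis_vec v))"

lemma ideal_gen_apply:
  "ideal_gen u m k v w =
    (if take (length u) w = u \<and> drop m (drop (length u) w) = v then k (take m (drop (length u) w)) else 0)"
  by (simp add: tens_def basis_vec_def)

lemma ideal_gen_sandwich: "length z = m \<Longrightarrow> ideal_gen u m k v (u @ z @ v) = k z"
  by (simp add: ideal_gen_apply)

lemma ideal_gen_nonzeroD:
  assumes "ideal_gen u m k v w \<noteq> 0"
  shows "w = u @ take m (drop (length u) w) @ v" and "k (take m (drop (length u) w)) \<noteq> 0"
proof -
  have "take (length u) w = u" "drop m (drop (length u) w) = v"
    and nz: "k (take m (drop (length u) w)) \<noteq> 0"
    using assms unfolding ideal_gen_apply by (auto split: if_splits)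
  then show "w = u @ take m (drop (length u) w) @ v" by (metis append_take_drop_id)
  show "k (take m (drop (length u) w)) \<noteq> 0" by (fact nz)
qed

lemma ideal_gen_tensor_space:
  assumes "set u \<subseteq> X" "set v \<subseteq> X" "k \<in> tensor_space X m" "length u + m + length v = n"
  shows "ideal_gen u m k v \<in> tensor_space X n"
  unfolding tensor_space_def
proof (intro CollectI allI impI)
  fix w assume nz: "ideal_gen u m k v w \<noteq> 0"
  define z where "z = take m (drop (length u) w)"
  have "z \<in> words X m"
    using ideal_gen_nonzeroD(2)[OF nz] assms(3) unfolding tensor_space_def z_def by auto
  then have "u @ z @ v \<in> words X n" using assms unfolding words_def by auto
  then show "w \<in> words X n" using ideal_gen_nonzeroD(1)[OF nz] unfolding z_def by simp
qed

lemma dcover_ideal_deg_subset: "dcover_ideal_deg tri X q d n \<subseteq> tensor_space X n"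
  unfolding dcover_ideal_deg_def
proof (rule module.span_minimal[OF module_pointwise_scale])
  show "module.subspace (\<lambda>c f w. c * f w) (tensor_space X n)"
    by (rule module.subspaceI[OF module_pointwise_scale]) (auto simp: tensor_space_def, metis add.right_neutral)
next
  show "{ideal_gen u m k v | u v m k. set u \<subseteq> X \<and> set v \<subseteq> X \<and> 2 \<le> m \<and> m \<le> d \<and>
      k \<in> ker_Q tri X q m \<and> length u + m + length v = n} \<subseteq> tensor_space X n"
    using ideal_gen_tensor_space unfolding ker_Q_def by blast
qed

lemma nichols_ideal_deg_subset: "nichols_ideal_deg tri X q n \<subseteq> tensor_space X n"
  unfolding nichols_ideal_deg_def ker_Q_def by (auto simp: tensor_space_def)


section \<open>Products and cocycle weights of words\<close>

definition word_prod :: "('g, 'b) monoid_scheme \<Rightarrow> 'g list \<Rightarrow> 'g" where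
  "word_prod G = foldl (\<lambda>a x. a \<otimes>\<^bsub>G\<^esub> x) \<one>\<^bsub>G\<^esub>"

definition homog_part :: "('g, 'b) monoid_scheme \<Rightarrow> 'g \<Rightarrow> ('g list \<Rightarrow> 'k::field) \<Rightarrow> 'g list \<Rightarrow> 'k" where
  "homog_part G h = diagonal_op (\<lambda>w. of_bool (word_prod G w = h))"

fun cocycle_weight :: "('g, 'b) monoid_scheme \<Rightarrow> ('g \<Rightarrow> 'g \<Rightarrow> 'k::field) \<Rightarrow> 'g \<Rightarrow> 'g list \<Rightarrow> 'k" where
  "cocycle_weight G t p [] = 1"
| "cocycle_weight G t p (x # w) = t p x * cocycle_weight G t (p \<otimes>\<^bsub>G\<^esub> x) w"

lemma group_2cocycle_nonzero:
  "group_2cocycle G t \<Longrightarrow> x \<in> carrier G \<Longrightarrow> y \<in> carrier G \<Longrightarrow> t x y \<noteq> 0"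
  unfolding group_2cocycle_def by blast

lemma group_2cocycle_assoc:
  "group_2cocycle G t \<Longrightarrow> x \<in> carrier G \<Longrightarrow> y \<in> carrier G \<Longrightarrow> z \<in> carrier G \<Longrightarrow>
    t x y * t (x \<otimes>\<^bsub>G\<^esub> y) z = t y z * t x (y \<otimes>\<^bsub>G\<^esub> z)"
  unfolding group_2cocycle_def by blast

lemma group_2cocycle_unit:
  "group_2cocycle G t \<Longrightarrow> x \<in> carrier G \<Longrightarrow> t x \<one>\<^bsub>G\<^esub> = 1 \<and> t \<one>\<^bsub>G\<^esub> x = 1"
  unfolding group_2cocycle_def by blast

lemma group_2cocycle_inverse:
  assumes "group_2cocycle G t"
  shows "group_2cocycle G (\<lambda>a b. inverse (t a b))"
  using assms unfolding group_2cocycle_def by (simp flip: inverse_mult_distrib)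

lemma cocycle_weight_inverse:
  "cocycle_weight G (\<lambda>a b. inverse (t a b)) p w = inverse (cocycle_weight G t p w)"
  by (induction w arbitrary: p) simp_all

context group begin

lemma foldl_mult_closed:
  "p \<in> carrier G \<Longrightarrow> set u \<subseteq> carrier G \<Longrightarrow> foldl (\<lambda>a x. a \<otimes> x) p u \<in> carrier G"
  by (induction u arbitrary: p) auto

lemma word_prod_closed: "set u \<subseteq> carrier G \<Longrightarrow> word_prod G u \<in> carrier G"
  unfolding word_prod_def by (simp add: foldl_mult_closed)

lemma foldl_mult_eq:
  "p \<in> carrier G \<Longrightarrow> set u \<subseteq> carrier G \<Longrightarrow> foldl (\<lambda>a x. a \<otimes> x) p u = p \<otimes> word_prod G u"
proof (induction u arbitrary: p)
  case Nil then show ?case by (simp add: word_prod_def)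
next
  case (Cons x u)
  then have "foldl (\<lambda>a x. a \<otimes> x) p (x # u) = p \<otimes> (x \<otimes> word_prod G u)"
    by (simp add: m_assoc word_prod_closed)
  also have "x \<otimes> word_prod G u = foldl (\<lambda>a x. a \<otimes> x) x u"
    using Cons by simp
  also have "\<dots> = word_prod G (x # u)"
    using Cons.prems by (simp add: word_prod_def)
  finally show ?case .
qed

lemma word_prod_Cons:
  "x \<in> carrier G \<Longrightarrow> set u \<subseteq> carrier G \<Longrightarrow> word_prod G (x # u) = x \<otimes> word_prod G u"
  using foldl_mult_eq[of x u] by (simp add: word_prod_def)

lemma word_prod_append:
  "set u \<subseteq> carrier G \<Longrightarrow> set z \<subseteq> carrier G \<Longrightarrow> word_prod G (u @ z) = word_prod G u \<otimes> word_prod G z"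
  using foldl_mult_eq[of "word_prod G u" z] word_prod_closed by (simp add: word_prod_def)

lemma rtri_closed: "a \<in> carrier G \<Longrightarrow> b \<in> carrier G \<Longrightarrow> rtri G a b \<in> carrier G"
  unfolding rtri_def by (intro m_closed inv_closed)

lemma rtri_mult: "a \<in> carrier G \<Longrightarrow> b \<in> carrier G \<Longrightarrow> rtri G a b \<otimes> a = a \<otimes> b"
  unfolding rtri_def by (simp add: m_assoc)

lemma word_prod_bstep:
  assumes "set w \<subseteq> carrier G" "Suc i < length w"
  shows "word_prod G (bstep (rtri G) i w) = word_prod G w"
proof -
  obtain u a b v where w: "w = u @ a # b # v" "length u = i"
    using list_split_at_pair[OF assms(2)] .
  have c: "set u \<subseteq> carrier G" "a \<in> carrier G" "b \<in> carrier G" "set v \<subseteq> carrier G"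
    using assms(1) w(1) by auto
  then have "rtri G a b \<otimes> (a \<otimes> word_prod G v) = a \<otimes> (b \<otimes> word_prod G v)"
    using rtri_mult by (simp add: rtri_closed word_prod_closed flip: m_assoc)
  then show ?thesis
    using c by (simp add: w bstep_append word_prod_append word_prod_Cons rtri_closed)
qed

lemma word_prod_bstep_words:
  "X \<subseteq> carrier G \<Longrightarrow> w \<in> words X n \<Longrightarrow> Suc i < n \<Longrightarrow> word_prod G (bstep (rtri G) i w) = word_prod G w"
  unfolding words_def using word_prod_bstep by auto

lemma ker_Q_homog_part:
  assumes "X \<subseteq> carrier G" "k \<in> ker_Q (rtri G) X q m"
  shows "homog_part G h k \<in> ker_Q (rtri G) X q m"
  unfolding homog_part_def
  by (rule ker_Q_diagonal_op[OF _ assms(2)]) (simp add: word_prod_bstep_words[OF assms(1)] mult.commute)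

lemma cocycle_weight_append:
  assumes "p \<in> carrier G" "set u \<subseteq> carrier G"
  shows "cocycle_weight G t p (u @ z) = cocycle_weight G t p u * cocycle_weight G t (p \<otimes> word_prod G u) z"
proof -
  have "cocycle_weight G t p (u @ z) = cocycle_weight G t p u * cocycle_weight G t (foldl (\<lambda>a x. a \<otimes> x) p u) z"
    for p by (induction u arbitrary: p) auto
  then show ?thesis using assms by (simp add: foldl_mult_eq)
qed

lemma cocycle_weight_nonzero:
  assumes "group_2cocycle G t" "p \<in> carrier G" "set w \<subseteq> carrier G"
  shows "cocycle_weight G t p w \<noteq> 0"
  using assms(2,3) by (induction w arbitrary: p) (simp_all add: group_2cocycle_nonzero[OF assms(1)])

lemma cocycle_weight_shift:
  assumes coc: "group_2cocycle G t" and "p \<in> carrier G" "set z \<subseteq> carrier G"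
  shows "cocycle_weight G t p z = t p (word_prod G z) * cocycle_weight G t \<one> z"
  using assms(2,3)
proof (induction z arbitrary: p)
  case Nil then show ?case using group_2cocycle_unit[OF coc] by (simp add: word_prod_def)
next
  case (Cons x z)
  then have c: "x \<in> carrier G" "set z \<subseteq> carrier G" "word_prod G z \<in> carrier G"
    by (auto simp: word_prod_closed)
  have "cocycle_weight G t p (x # z) = (t p x * t (p \<otimes> x) (word_prod G z)) * cocycle_weight G t \<one> z"
    using Cons.IH[of "p \<otimes> x"] Cons.prems c by (simp add: mult.assoc)
  also have "\<dots> = t p (x \<otimes> word_prod G z) * (t x (word_prod G z) * cocycle_weight G t \<one> z)"
    using group_2cocycle_assoc[OF coc Cons.prems(1) c(1,3)] by (simp add: ac_simps)
  also have "t x (word_prod G z) * cocycle_weight G t \<one> z = cocycle_weight G t \<one> (x # z)"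
    using Cons.IH[of x] group_2cocycle_unit[OF coc] c by simp
  finally show ?case using c by (simp add: word_prod_Cons)
qed

text \<open>The braiding relation for weights: two applications of the cocycle identity, using
  (a \<triangleright> b) a = a b.\<close>

lemma cocycle_weight_bstep:
  assumes coc: "group_2cocycle G t" and "set w \<subseteq> carrier G" "Suc i < length w"
  shows "cocycle_weight G t \<one> (bstep (rtri G) i w) * t (w ! i) (w ! Suc i) =
    t (rtri G (w ! i) (w ! Suc i)) (w ! i) * cocycle_weight G t \<one> w"
proof -
  obtain u a b v where w: "w = u @ a # b # v" "length u = i"
    using list_split_at_pair[OF assms(3)] .
  define r where "r = word_prod G u"
  define c where "c = rtri G a b"
  have ab: "a \<in> carrier G" "b \<in> carrier G" "set u \<subseteq> carrier G" using assms(2) w(1) by auto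
  have rc: "r \<in> carrier G" "c \<in> carrier G"
    unfolding r_def c_def using ab by (auto intro: word_prod_closed rtri_closed)
  have ca: "c \<otimes> a = a \<otimes> b" unfolding c_def using ab by (simp add: rtri_mult)
  let ?W = "\<lambda>p z. cocycle_weight G t p z"
  have expand: "?W \<one> (u @ x # y # v) = ?W \<one> u * (t r x * t (r \<otimes> x) y) * ?W (r \<otimes> x \<otimes> y) v"
    if "x \<in> carrier G" for x y
    using ab(3) rc(1) that by (simp add: cocycle_weight_append flip: r_def)
  have "r \<otimes> c \<otimes> a = r \<otimes> a \<otimes> b" using ca ab rc by (simp add: m_assoc)
  then have "?W \<one> (bstep (rtri G) i w) * t a b =
      ?W \<one> u * (t r c * t (r \<otimes> c) a) * t a b * ?W (r \<otimes> a \<otimes> b) v"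
    using expand[OF rc(2)] by (simp add: w bstep_append c_def)
  also have "\<dots> = t c a * (?W \<one> u * (t r a * t (r \<otimes> a) b) * ?W (r \<otimes> a \<otimes> b) v)"
    using group_2cocycle_assoc[OF coc rc(1) ab(1,2)] group_2cocycle_assoc[OF coc rc ab(1)]
    unfolding ca by (simp only: ac_simps)
  also have "\<dots> = t c a * ?W \<one> w"
    using expand[OF ab(1)] by (simp add: w)
  finally show ?thesis using w by (simp add: nth_append c_def)
qed

end


section \<open>Twisting\<close>

text \<open>twist_rel says that q' is the twist of q by \<sigma> = t^-1:
  q'(x, y) = \<sigma>(x, y) q(x, y) \<sigma>(x \<triangleright> y, x)^-1.\<close>

locale cocycle_twist = group G for G :: "('g, 'b) monoid_scheme" +
  fixes X :: "'g set" and q q' t :: "'g \<Rightarrow> 'g \<Rightarrow> 'k::field"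
  assumes finite_carrier: "finite (carrier G)" and X_subset: "X \<subseteq> carrier G"
    and cocycle: "group_2cocycle G t"
    and twist_rel: "\<And>x y. x \<in> X \<Longrightarrow> y \<in> X \<Longrightarrow> q' x y * t x y = t (rtri G x y) x * q x y"
begin

abbreviation weight :: "'g list \<Rightarrow> 'k" where
  "weight \<equiv> cocycle_weight G t \<one>\<^bsub>G\<^esub>"

abbreviation twist :: "('g list \<Rightarrow> 'k) \<Rightarrow> 'g list \<Rightarrow> 'k" where
  "twist \<equiv> diagonal_op weight"

lemma words_carrier: "w \<in> words X n \<Longrightarrow> set w \<subseteq> carrier G"
  using X_subset unfolding words_def by auto

lemma weight_bstep:
  assumes "w \<in> words X n" "Suc i < n"
  shows "weight (bstep (rtri G) i w) * q (w ! i) (w ! Suc i) = q' (w ! i) (w ! Suc i) * weight w"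
proof -
  have ab: "w ! i \<in> X" "w ! Suc i \<in> X" using assms unfolding words_def by auto
  then have "t (w ! i) (w ! Suc i) \<noteq> 0"
    using X_subset group_2cocycle_nonzero[OF cocycle] by blast
  moreover have "weight (bstep (rtri G) i w) * q (w ! i) (w ! Suc i) * t (w ! i) (w ! Suc i) =
      q' (w ! i) (w ! Suc i) * weight w * t (w ! i) (w ! Suc i)"
    using cocycle_weight_bstep[OF cocycle words_carrier[OF assms(1)]] assms twist_rel[OF ab]
    unfolding words_def by (simp add: ac_simps)
  ultimately show ?thesis by simp
qed

lemma ker_Q_twist: "f \<in> ker_Q (rtri G) X q m \<Longrightarrow> twist f \<in> ker_Q (rtri G) X q' m"
  by (rule ker_Q_diagonal_op[where q = q]) (simp_all add: weight_bstep)

lemma nichols_ideal_twist: "twist ` nichols_ideal_deg (rtri G) X q n \<subseteq> nichols_ideal_deg (rtri G) X q' n"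
  unfolding nichols_ideal_deg_def using ker_Q_twist by (auto simp: diagonal_op_def)

definition sandwich_factor :: "'g list \<Rightarrow> 'g list \<Rightarrow> 'g \<Rightarrow> 'k" where
  "sandwich_factor u v h =
    weight u * t (word_prod G u) h * cocycle_weight G t (word_prod G u \<otimes>\<^bsub>G\<^esub> h) v"

lemma weight_sandwich:
  assumes "set u \<subseteq> carrier G" "set z \<subseteq> carrier G"
  shows "weight (u @ z @ v) = sandwich_factor u v (word_prod G z) * weight z"
  using assms cocycle_weight_shift[OF cocycle word_prod_closed[OF assms(1)] assms(2)]
  by (simp add: cocycle_weight_append word_prod_closed word_prod_append m_assoc sandwich_factor_def ac_simps)

lemma twist_ideal_gen:
  assumes "set u \<subseteq> X" "k \<in> tensor_space X m"
  shows "twist (ideal_gen u m k v) =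
    (\<Sum>h\<in>carrier G. (\<lambda>w. sandwich_factor u v h * ideal_gen u m (twist (homog_part G h k)) v w))"
proof
  fix w
  show "twist (ideal_gen u m k v) w =
    (\<Sum>h\<in>carrier G. (\<lambda>w. sandwich_factor u v h * ideal_gen u m (twist (homog_part G h k)) v w)) w"
  proof (cases "ideal_gen u m k v w = 0")
    case True
    then show ?thesis
      unfolding sum_apply ideal_gen_apply by (auto simp: diagonal_op_def homog_part_def split: if_splits)
  next
    case False
    define z where "z = take m (drop (length u) w)"
    have w: "w = u @ z @ v" "k z \<noteq> 0" using ideal_gen_nonzeroD[OF False] unfolding z_def by auto
    then have "z \<in> words X m" using assms(2) unfolding tensor_space_def by blast
    then have z: "length z = m" "set z \<subseteq> carrier G" using words_carrier unfolding words_def by auto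
    have "set u \<subseteq> carrier G" using assms(1) X_subset by blast
    then have "twist (ideal_gen u m k v) w = sandwich_factor u v (word_prod G z) * (weight z * k z)"
      using z by (simp add: w(1) ideal_gen_sandwich diagonal_op_def weight_sandwich)
    also have "\<dots> = (\<Sum>h\<in>carrier G. if h = word_prod G z then sandwich_factor u v h * (weight z * k z) else 0)"
      using finite_carrier z(2) by (simp add: word_prod_closed)
    also have "\<dots> = (\<Sum>h\<in>carrier G. (\<lambda>w. sandwich_factor u v h * ideal_gen u m (twist (homog_part G h k)) v w)) w"
      unfolding sum_apply w(1) ideal_gen_sandwich[OF z(1)]
      by (intro sum.cong) (auto simp: diagonal_op_def homog_part_def)
    finally show ?thesis .
  qed
qed

lemma dcover_ideal_twist:
  "twist ` dcover_ideal_deg (rtri G) X q d n \<subseteq> dcover_ideal_deg (rtri G) X q' d n"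
proof -
  let ?span = "module.span (\<lambda>(c::'k) f w. c * f w)"
  let ?gens = "\<lambda>q. {ideal_gen u m k v | u v m k. set u \<subseteq> X \<and> set v \<subseteq> X \<and> 2 \<le> m \<and> m \<le> d \<and>
    k \<in> ker_Q (rtri G) X q m \<and> length u + m + length v = n}"
  note span_rules = module.span_sum[OF module_pointwise_scale] module.span_scale[OF module_pointwise_scale]
    module.span_base[OF module_pointwise_scale]
  have "twist g \<in> ?span (?gens q')" if "g \<in> ?gens q" for g
  proof -
    obtain u v m k where g: "g = ideal_gen u m k v" "set u \<subseteq> X" "set v \<subseteq> X" "2 \<le> m" "m \<le> d"
      "k \<in> ker_Q (rtri G) X q m" "length u + m + length v = n"
      using \<open>g \<in> ?gens q\<close> by blast
    have "ideal_gen u m (twist (homog_part G h k)) v \<in> ?gens q'" for h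
      using g ker_Q_twist ker_Q_homog_part[OF X_subset] by blast
    moreover have "k \<in> tensor_space X m" using g(6) unfolding ker_Q_def by blast
    ultimately show ?thesis
      unfolding g(1) by (simp add: twist_ideal_gen[OF g(2)] span_rules)
  qed
  then have "twist ` ?gens q \<subseteq> ?span (?gens q')" by blast
  then have "?span (twist ` ?gens q) \<subseteq> ?span (?gens q')"
    by (rule module.span_minimal[OF module_pointwise_scale])
      (rule module.subspace_span[OF module_pointwise_scale])
  then show ?thesis
    unfolding dcover_ideal_deg_def module_hom.span_image[OF module_hom_diagonal_op, symmetric] .
qed

lemma inverse_twist: "cocycle_twist G X q' q (\<lambda>a b. inverse (t a b))"
proof -
  have "q x y * inverse (t x y) = inverse (t (rtri G x y) x) * q' x y" if "x \<in> X" "y \<in> X" for x y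
  proof -
    have "t x y \<noteq> 0" "t (rtri G x y) x \<noteq> 0"
      using that X_subset rtri_closed group_2cocycle_nonzero[OF cocycle] by blast+
    then show ?thesis using twist_rel[OF that] by (simp add: field_simps)
  qed
  then show ?thesis
    using finite_carrier X_subset group_2cocycle_inverse[OF cocycle] is_group
    by (simp add: cocycle_twist_def cocycle_twist_axioms_def)
qed

lemma twist_inverse_twist:
  "f \<in> tensor_space X n \<Longrightarrow> twist (diagonal_op (cocycle_weight G (\<lambda>a b. inverse (t a b)) \<one>\<^bsub>G\<^esub>) f) = f"
  using cocycle_weight_nonzero[OF cocycle] words_carrier
  unfolding tensor_space_def cocycle_weight_inverse diagonal_op_def
  by (fastforce simp: fun_eq_iff)

lemma nichols_eq_dcover_twist:
  assumes "nichols_eq_dcover (rtri G) X q d"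
  shows "nichols_eq_dcover (rtri G) X q' d"
  unfolding nichols_eq_dcover_def
proof
  fix n
  interpret inv: cocycle_twist G X q' q "\<lambda>a b. inverse (t a b)" by (rule inverse_twist)
  have onto: "twist ` A = A'"
    if "twist ` A \<subseteq> A'" "inv.twist ` A' \<subseteq> A" "A' \<subseteq> tensor_space X n" for A A'
    using that twist_inverse_twist by (force simp: image_subset_iff)
  have "dcover_ideal_deg (rtri G) X q' d n = twist ` dcover_ideal_deg (rtri G) X q d n"
    by (rule onto[OF dcover_ideal_twist inv.dcover_ideal_twist dcover_ideal_deg_subset, symmetric])
  also have "\<dots> = twist ` nichols_ideal_deg (rtri G) X q n"
    using assms unfolding nichols_eq_dcover_def by simp
  also have "\<dots> = nichols_ideal_deg (rtri G) X q' n"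
    by (rule onto[OF nichols_ideal_twist inv.nichols_ideal_twist nichols_ideal_deg_subset])
  finally show "dcover_ideal_deg (rtri G) X q' d n = nichols_ideal_deg (rtri G) X q' n" .
qed

lemma nichols_eq_dcover_twist_iff:
  "nichols_eq_dcover (rtri G) X q d \<longleftrightarrow> nichols_eq_dcover (rtri G) X q' d"
proof -
  interpret inv: cocycle_twist G X q' q "\<lambda>a b. inverse (t a b)" by (rule inverse_twist)
  show ?thesis using nichols_eq_dcover_twist inv.nichols_eq_dcover_twist by blast
qed

end

theorem mainTheorem15:
  fixes G :: "('g, 'b) monoid_scheme" and X :: "'g set"
    and q q' :: "'g \<Rightarrow> 'g \<Rightarrow> 'k::field" and d :: nat
  assumes "group G" and "finite (carrier G)"
    and "X \<subseteq> carrier G" and "conj_class G X"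
    and "yd_cocycle G X q"
    and "rack_cocycle (rtri G) X q'"
    and "twist_equivalent G X q q'"
    and "2 \<le> d"
  shows "nichols_eq_dcover (rtri G) X q d \<longleftrightarrow> nichols_eq_dcover (rtri G) X q' d"
proof -
  obtain \<sigma> where \<sigma>: "group_2cocycle G \<sigma>"
    and tw: "\<forall>x\<in>X. \<forall>y\<in>X. q' x y = \<sigma> x y * q x y * inverse (\<sigma> (rtri G x y) x)"
    using assms(7) unfolding twist_equivalent_def by blast
  have "q x y * \<sigma> x y = \<sigma> (rtri G x y) x * q' x y" if "x \<in> X" "y \<in> X" for x y
  proof -
    have "\<sigma> (rtri G x y) x \<noteq> 0"
      using that assms(3) group.rtri_closed[OF assms(1)] group_2cocycle_nonzero[OF \<sigma>] by blast
    then show ?thesis using tw that by (simp add: field_simps)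
  qed
  then interpret \<sigma>: cocycle_twist G X q' q \<sigma>
    using assms(1-3) \<sigma> by (simp add: cocycle_twist_def cocycle_twist_axioms_def)
  show ?thesis using \<sigma>.nichols_eq_dcover_twist_iff by blast
qed

end
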